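(* Let $d\geq 2$ and $n$ be positive integers, $t\in\{1,d-1\}$, and $n\equiv t\pmod d$ (so $tn\equiv 1\pmod d$). Then, modulo $(1-aq^{tn})(a-q^{tn})(b-q^{tn})$, \[ \sum_{k=0}^{(tn-1)/d}\frac{(aq;q^d)_k(q/a;q^d)_k(q/b;q^d)_k}{(q^d;q^d)_k(c;q^d)_k(q^{d+3}/bc;q^d)_k}q^{dk} \equiv\frac{(1-aq^{tn})(a-q^{tn})}{(a-b)(1-ab)}\frac{(c/aq;q^d)_{m}(ac/q;q^d)_{m}}{(c;q^d)_{m}(c/q^2;q^d)_{m}} +\frac{(b-q^{tn})(ab-1-a^2+aq^{tn})}{(a-b)(1-ab)}\frac{(q/b)^{m}(bc/q;q^d)_{m}(q^{d+2}/c;q^d)_{m}}{(c;q^d)_{m}(q^{d+3}/bc;q^d)_{m}}, \] where $m=(tn-1)/d$.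
   Context: For complex $x$ and $q$, $(x;q)_0=1$ and $(x;q)_m=(1-x)(1-xq)\cdots(1-xq^{m-1})$ for positive integers $m$. Here $a,b,c,q$ are indeterminates and both sides are rational functions in them; the congruence $A\equiv B$ modulo $P=(1-aq^{tn})(a-q^{tn})(b-q^{tn})$ means that $A-B=P\cdot R$ for a rational function $R$ whose denominator is coprime to each of the factors $1-aq^{tn}$, $a-q^{tn}$, $b-q^{tn}$. *)

theory Defs
  imports "HOL-Computational_Algebra.Polynomial" "HOL-Computational_Algebra.Fraction_Field"
begin

definition qpoch :: "'a::comm_ring_1 \<Rightarrow> 'a \<Rightarrow> nat \<Rightarrow> 'a" where
  "qpoch x q m = (\<Prod>i<m. 1 - x * q ^ i)"

text \<open>Polynomial ring C[a,b,c,q] realised as iterated univariate polynomials.\<close>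
type_synonym mpoly4 = "complex poly poly poly poly"

definition va :: mpoly4 where "va = [:[:[:[:0, 1:]:]:]:]"
definition vb :: mpoly4 where "vb = [:[:[:0, 1:]:]:]"
definition vc :: mpoly4 where "vc = [:[:0, 1:]:]"
definition vq :: mpoly4 where "vq = [:0, 1:]"

type_synonym ratfun4 = "mpoly4 fract"

definition rf :: "mpoly4 \<Rightarrow> ratfun4" where "rf p = Fract p 1"

text \<open>A \<equiv> B modulo the product of the polynomials fs: A - B = (prod fs) * R where
  R = N/D is a rational function whose denominator D is coprime to each factor.\<close>
definition rf_cong :: "ratfun4 \<Rightarrow> ratfun4 \<Rightarrow> mpoly4 list \<Rightarrow> bool" where
  "rf_cong A B fs \<longleftrightarrow> (\<exists>N D. D \<noteq> 0 \<and> (\<forall>f\<in>set fs. coprime D f) \<and>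
      A - B = rf (prod_list fs) * Fract N D)"

end

theory Submission
  imports Defs "HOL-Computational_Algebra.Polynomial_Factorial" "HOL-Computational_Algebra.Field_as_Ring"
begin

text \<open>Write \<open>N = t n = d m + 1\<close>. The three factors of the modulus generate the kernels of the
  substitutions \<open>a = q\<^sup>-\<^sup>N\<close>, \<open>a = q\<^sup>N\<close> and \<open>b = q\<^sup>N\<close> on \<open>\<complex>[a, b, c, q]\<close>; these kernels are prime and
  pairwise distinct. So it suffices that the difference of the two sides vanishes under each
  substitution: then every factor divides its numerator in lowest terms and is coprime to its
  denominator. Under each substitution the sum becomes a terminating q-Pfaff-Saalschuetz sum in base
  \<open>q\<^sup>d\<close>, evaluated here by a WZ telescoping argument, and the closed form collapses to that
  evaluation because one of its two terms vanishes.\<close>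

section \<open>The terminating q-Pfaff-Saalschuetz sum\<close>

lemma qpoch_0 [simp]: "qpoch x q 0 = 1"
  by (simp add: qpoch_def)

lemma qpoch_Suc: "qpoch x q (Suc k) = qpoch x q k * (1 - x * q ^ k)"
  by (simp add: qpoch_def)

lemma qpoch_Suc_shift: "qpoch x q (Suc k) = (1 - x) * qpoch (x * q) q k"
  unfolding qpoch_def prod.lessThan_Suc_shift by (simp add: mult.assoc)

lemma qpoch_eq_0_iff: "qpoch (x :: 'a :: idom) q k = 0 \<longleftrightarrow> (\<exists>i<k. x * q ^ i = 1)"
  by (auto simp add: qpoch_def)

lemma qpoch_neq_0: "(\<And>i. i < k \<Longrightarrow> 1 - (x :: 'a :: idom) * q ^ i \<noteq> 0) \<Longrightarrow> qpoch x q k \<noteq> 0"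
  by (auto simp add: qpoch_eq_0_iff)

lemma qpoch_reverse:
  fixes x y p :: "'a :: field"
  assumes "0 < m \<Longrightarrow> x * y * p ^ (m - 1) = 1"
  shows "qpoch x p m = (\<Prod>i<m. - (x * p ^ i)) * qpoch y p m"
proof (cases "m = 0")
  case False
  have factor: "1 - x * p ^ i = - (x * p ^ i) * (1 - y * p ^ (m - Suc i))" if "i < m" for i
  proof -
    have "p ^ i * p ^ (m - Suc i) = p ^ (m - 1)"
      using that by (simp flip: power_add)
    then have "x * p ^ i * (y * p ^ (m - Suc i)) = 1"
      using assms False by (metis mult.assoc mult.left_commute not_gr0)
    then show ?thesis by (simp add: algebra_simps)
  qed
  have "qpoch x p m = (\<Prod>i<m. - (x * p ^ i) * (1 - y * p ^ (m - Suc i)))"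
    unfolding qpoch_def by (rule prod.cong) (auto simp: factor)
  also have "\<dots> = (\<Prod>i<m. - (x * p ^ i)) * (\<Prod>i<m. 1 - y * p ^ (m - Suc i))"
    by (rule prod.distrib)
  also have "(\<Prod>i<m. 1 - y * p ^ (m - Suc i)) = qpoch y p m"
    unfolding qpoch_def by (rule prod.nat_diff_reindex)
  finally show ?thesis .
qed simp

lemma qpoch_ratio_reverse:
  fixes x y x' y' p :: "'a :: field"
  assumes "x' \<noteq> 0" "p \<noteq> 0"
    and "0 < m \<Longrightarrow> x * y * p ^ (m - 1) = 1" "0 < m \<Longrightarrow> x' * y' * p ^ (m - 1) = 1"
  shows "qpoch x p m / qpoch x' p m = (x / x') ^ m * (qpoch y p m / qpoch y' p m)"
proof -
  have "(\<Prod>i<m. - (x * p ^ i)) / (\<Prod>i<m. - (x' * p ^ i)) = (\<Prod>i<m. - (x * p ^ i) / - (x' * p ^ i))"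
    by (rule prod_dividef[symmetric])
  also have "\<dots> = (x / x') ^ m"
    using assms(1,2) by (simp add: field_simps)
  finally show ?thesis
    by (simp only: qpoch_reverse[OF assms(3)] qpoch_reverse[OF assms(4)] times_divide_times_eq[symmetric])
qed

text \<open>\<open>saal_term\<close> is the summand of the terminating q-Pfaff-Saalschuetz sum
  \<open>3\<phi>2(A, B, p\<^sup>-\<^sup>n; C, A B p\<^sup>1\<^sup>-\<^sup>n / C; p, p)\<close>, and \<open>saal_cert\<close> is a WZ certificate for it.\<close>

definition saal_term :: "'a :: field \<Rightarrow> 'a \<Rightarrow> 'a \<Rightarrow> 'a \<Rightarrow> nat \<Rightarrow> nat \<Rightarrow> 'a" where
  "saal_term A B C p n k = qpoch A p k * qpoch B p k * qpoch (1 / p ^ n) p k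
     / (qpoch p p k * qpoch C p k * qpoch (A * B * p / (C * p ^ n)) p k) * p ^ k"

definition saal_cert :: "'a :: field \<Rightarrow> 'a \<Rightarrow> 'a \<Rightarrow> 'a \<Rightarrow> nat \<Rightarrow> nat \<Rightarrow> 'a" where
  "saal_cert A B C p n k = (if k = 0 then 0 else
     - (C * p ^ n / (A * B)) * (qpoch A p k * qpoch B p k * qpoch (1 / p ^ n) p (k - 1)
       / (qpoch p p (k - 1) * qpoch C p (k - 1) * qpoch (A * B * p / (C * p ^ n)) p (k - 1))))"

lemma saal_rational_identity:
  fixes A B C p X Y u v w z :: "'a :: field"
  assumes nz: "X \<noteq> 0" "p \<noteq> 0" "A \<noteq> 0" "B \<noteq> 0" "C \<noteq> 0" "u \<noteq> 0" "v \<noteq> 0" "w \<noteq> 0" "z \<noteq> 0"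
    and u: "u = 1 - p * Y" and v: "v = 1 - C * Y" and w: "w = C * X - A * B * p * Y"
    and z: "z = C * X - A * B"
  shows "(1 - 1 / (X * p)) * (p * Y) / (u * v * (z / (C * X))) * ((1 - C * X) * (1 - C * X / (A * B)))
     - (1 - Y / X) * (p * Y) / (u * v * (w / (C * X))) * ((1 - C * X / A) * (1 - C * X / B))
   = - (C * X / (A * B)) * ((1 - A * p * Y) * (1 - B * p * Y) * (1 - Y / X) / (u * v * (w / (C * X))) - 1)"
proof -
  have term1: "(1 - 1 / (X * p)) * (p * Y) / (u * v * (z / (C * X))) * ((1 - C * X) * (1 - C * X / (A * B)))
      = (1 - X * p) * Y * C * (1 - C * X) * w / (u * v * w * A * B)"
    using nz by (simp add: z field_simps)
  have term2: "(1 - Y / X) * (p * Y) / (u * v * (w / (C * X))) * ((1 - C * X / A) * (1 - C * X / B))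
      = (X - Y) * p * Y * C * (A - C * X) * (B - C * X) / (u * v * w * A * B)"
    using nz by (simp add: field_simps)
  have rhs: "- (C * X / (A * B)) * ((1 - A * p * Y) * (1 - B * p * Y) * (1 - Y / X) / (u * v * (w / (C * X))) - 1)
      = X * C * (u * v * w - C * (1 - A * p * Y) * (1 - B * p * Y) * (X - Y)) / (u * v * w * A * B)"
    using nz by (simp add: field_simps)
  have numerators: "(1 - X * p) * Y * C * (1 - C * X) * w - (X - Y) * p * Y * C * (A - C * X) * (B - C * X)
      = X * C * (u * v * w - C * (1 - A * p * Y) * (1 - B * p * Y) * (X - Y))"
    unfolding u v w by (simp add: algebra_simps)
  show ?thesis
    by (simp only: term1 term2 rhs numerators flip: diff_divide_distrib)
qed

lemma
  fixes A B C p :: "'a :: field" and n j :: nat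
  assumes "p \<noteq> 0"
  defines "X \<equiv> p ^ n" and "Y \<equiv> p ^ j"
  defines "P \<equiv> qpoch A p j * qpoch B p j * qpoch (1 / X) p j
      / (qpoch p p j * qpoch C p j * qpoch (A * B * p / (C * X)) p j) * (1 - A * Y) * (1 - B * Y)"
  shows saal_term_Suc:
      "saal_term A B C p n (Suc j) = P * ((1 - Y / X) * (p * Y) / ((1 - p * Y) * (1 - C * Y) * (1 - A * B * p / (C * X) * Y)))"
    and saal_term_Suc_Suc:
      "saal_term A B C p (Suc n) (Suc j) = P * ((1 - 1 / (X * p)) * (p * Y) / ((1 - p * Y) * (1 - C * Y) * (1 - A * B * p / (C * X) / p)))"
    and saal_cert_Suc_Suc:
      "saal_cert A B C p n (Suc (Suc j)) = P * (- (C * X / (A * B)) * ((1 - A * p * Y) * (1 - B * p * Y) * (1 - Y / X) / ((1 - p * Y) * (1 - C * Y) * (1 - A * B * p / (C * X) * Y))))"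
    and saal_cert_Suc:
      "saal_cert A B C p n (Suc j) = P * (- (C * X / (A * B)))"
proof -
  have shift_n: "qpoch (1 / p ^ Suc n) p (Suc j) = (1 - 1 / (X * p)) * qpoch (1 / X) p j"
    using assms by (subst qpoch_Suc_shift) (simp add: X_def mult.commute)
  have shift_D: "qpoch (A * B * p / (C * p ^ Suc n)) p (Suc j) = (1 - A * B * p / (C * X) / p) * qpoch (A * B * p / (C * X)) p j"
    using assms by (subst qpoch_Suc_shift) (simp add: X_def field_simps)
  show "saal_term A B C p n (Suc j) = P * ((1 - Y / X) * (p * Y) / ((1 - p * Y) * (1 - C * Y) * (1 - A * B * p / (C * X) * Y)))"
    unfolding saal_term_def P_def qpoch_Suc X_def Y_def by (simp add: divide_inverse mult_ac)
  show "saal_term A B C p (Suc n) (Suc j) = P * ((1 - 1 / (X * p)) * (p * Y) / ((1 - p * Y) * (1 - C * Y) * (1 - A * B * p / (C * X) / p)))"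
    unfolding saal_term_def P_def shift_n shift_D unfolding qpoch_Suc X_def Y_def
    by (simp add: divide_inverse mult_ac)
  show "saal_cert A B C p n (Suc (Suc j)) = P * (- (C * X / (A * B)) * ((1 - A * p * Y) * (1 - B * p * Y) * (1 - Y / X) / ((1 - p * Y) * (1 - C * Y) * (1 - A * B * p / (C * X) * Y))))"
    unfolding saal_cert_def P_def X_def Y_def by (simp add: qpoch_Suc divide_inverse mult_ac)
  show "saal_cert A B C p n (Suc j) = P * (- (C * X / (A * B)))"
    unfolding saal_cert_def P_def X_def Y_def by (simp add: qpoch_Suc divide_inverse mult_ac)
qed

lemma saal_telescoping:
  fixes A B C p :: "'a :: field"
  assumes nz: "A \<noteq> 0" "B \<noteq> 0" "C \<noteq> 0" "p \<noteq> 0"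
    and "k \<noteq> 0 \<Longrightarrow> 1 - p * p ^ (k - 1) \<noteq> 0" and "k \<noteq> 0 \<Longrightarrow> 1 - C * p ^ (k - 1) \<noteq> 0"
    and "k \<noteq> 0 \<Longrightarrow> 1 - A * B * p / (C * p ^ n) * p ^ (k - 1) \<noteq> 0"
    and "k \<noteq> 0 \<Longrightarrow> 1 - A * B * p / (C * p ^ n) / p \<noteq> 0"
  shows "saal_term A B C p (Suc n) k * ((1 - C * p ^ n) * (1 - C * p ^ n / (A * B)))
       - saal_term A B C p n k * ((1 - C * p ^ n / A) * (1 - C * p ^ n / B))
     = saal_cert A B C p n (Suc k) - saal_cert A B C p n k"
proof (cases k)
  case 0
  then show ?thesis using nz by (simp add: saal_term_def saal_cert_def qpoch_Suc field_simps)
next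
  case (Suc j)
  define X where "X = p ^ n"
  define Y where "Y = p ^ j"
  have "X \<noteq> 0" using nz by (simp add: X_def)
  have z: "1 - A * B * p / (C * X) / p = (C * X - A * B) / (C * X)"
    and w: "1 - A * B * p / (C * X) * Y = (C * X - A * B * p * Y) / (C * X)"
    using nz \<open>X \<noteq> 0\<close> by (simp_all add: field_simps)
  have factor_out: "P * a1 * d1 - P * a2 * d2 = P * (c * y) - P * c"
    if "a1 * d1 - a2 * d2 = c * (y - 1)" for P a1 d1 a2 d2 c y :: 'a
    using that by (metis mult.assoc right_diff_distrib mult.right_neutral)
  have "C * X - A * B \<noteq> 0" "C * X - A * B * p * Y \<noteq> 0"
    using assms(7,8) Suc z w by (auto simp: X_def Y_def)
  then show ?thesis
    unfolding Suc saal_term_Suc[OF nz(4), where n = n and j = j] saal_term_Suc_Suc[OF nz(4), where n = n and j = j]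
      saal_cert_Suc_Suc[OF nz(4), where n = n and j = j] saal_cert_Suc[OF nz(4), where n = n and j = j]
    unfolding X_def[symmetric] Y_def[symmetric] z w
    using assms(5,6) Suc nz \<open>X \<noteq> 0\<close>
    by (intro factor_out saal_rational_identity) (auto simp: Y_def)
qed

lemma saal_term_eq_0:
  fixes p :: "'a :: field"
  assumes "p \<noteq> 0" "n < k"
  shows "saal_term A B C p n k = 0"
  using assms by (auto simp: saal_term_def qpoch_eq_0_iff intro!: exI[of _ n])

lemma saal_cert_eq_0:
  fixes p :: "'a :: field"
  assumes "p \<noteq> 0" "Suc n < k"
  shows "saal_cert A B C p n k = 0"
  using assms by (auto simp: saal_cert_def qpoch_eq_0_iff intro!: exI[of _ n])

theorem q_saalschuetz:
  fixes A B C p :: "'a :: field"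
  assumes nz: "A \<noteq> 0" "B \<noteq> 0" "C \<noteq> 0" "p \<noteq> 0"
    and "\<forall>i<M. 1 - p * p ^ i \<noteq> 0" and "\<forall>i<M. 1 - C * p ^ i \<noteq> 0"
    and "\<forall>n\<le>M. \<forall>i\<le>M. 1 - A * B * p / (C * p ^ n) * p ^ i \<noteq> 0"
    and "\<forall>n<M. 1 - C * p ^ n / (A * B) \<noteq> 0"
    and "n \<le> M"
  shows "(\<Sum>k=0..n. saal_term A B C p n k)
     = qpoch (C / A) p n * qpoch (C / B) p n / (qpoch C p n * qpoch (C / (A * B)) p n)"
  using \<open>n \<le> M\<close>
proof (induction n)
  case 0
  then show ?case by (simp add: saal_term_def)
next
  case (Suc n)
  define den where "den = (1 - C * p ^ n) * (1 - C * p ^ n / (A * B))"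
  define num where "num = (1 - C * p ^ n / A) * (1 - C * p ^ n / B)"
  have "n < M" using Suc.prems by simp
  have "1 - A * B * p / (C * p ^ Suc n) * p ^ 0 \<noteq> 0"
    using assms(7) Suc.prems by blast
  moreover have "A * B * p / (C * p ^ Suc n) * p ^ 0 = A * B * p / (C * p ^ n) / p"
    using nz by (simp add: field_simps)
  ultimately have "1 - A * B * p / (C * p ^ n) / p \<noteq> 0"
    by simp
  then have step: "saal_term A B C p (Suc n) k * den - saal_term A B C p n k * num
      = saal_cert A B C p n (Suc k) - saal_cert A B C p n k" if "k \<le> Suc n" for k
    unfolding den_def num_def using assms(5-7) \<open>n < M\<close> that
    by (intro saal_telescoping nz) auto
  have "(\<Sum>k=0..Suc n. saal_term A B C p (Suc n) k * den - saal_term A B C p n k * num)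
      = (\<Sum>k=0..Suc n. saal_cert A B C p n (Suc k) - saal_cert A B C p n k)"
    by (rule sum.cong) (auto simp: step)
  also have "\<dots> = saal_cert A B C p n (Suc (Suc n)) - saal_cert A B C p n 0"
    by (rule sum_Suc_diff) simp
  also have "\<dots> = 0"
    using saal_cert_eq_0[OF nz(4), of n "Suc (Suc n)"] by (simp add: saal_cert_def)
  finally have "(\<Sum>k=0..Suc n. saal_term A B C p (Suc n) k) * den = (\<Sum>k=0..Suc n. saal_term A B C p n k) * num"
    by (simp only: sum_subtractf sum_distrib_right[symmetric] right_minus_eq)
  also have "(\<Sum>k=0..Suc n. saal_term A B C p n k) = (\<Sum>k=0..n. saal_term A B C p n k)"
    using saal_term_eq_0[OF nz(4)] by simp
  also have "\<dots> = qpoch (C / A) p n * qpoch (C / B) p n / (qpoch C p n * qpoch (C / (A * B)) p n)"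
    using Suc by simp
  finally have "(\<Sum>k=0..Suc n. saal_term A B C p (Suc n) k) * den
      = qpoch (C / A) p n * qpoch (C / B) p n / (qpoch C p n * qpoch (C / (A * B)) p n) * num" .
  moreover have "den \<noteq> 0"
    unfolding den_def using assms(6,8) \<open>n < M\<close> by auto
  ultimately have "(\<Sum>k=0..Suc n. saal_term A B C p (Suc n) k)
      = qpoch (C / A) p n * qpoch (C / B) p n / (qpoch C p n * qpoch (C / (A * B)) p n) * num / den"
    by (metis nonzero_mult_div_cancel_right)
  also have "\<dots> = qpoch (C / A) p (Suc n) * qpoch (C / B) p (Suc n) / (qpoch C p (Suc n) * qpoch (C / (A * B)) p (Suc n))"
    unfolding num_def den_def qpoch_Suc by (simp add: divide_inverse mult_ac)
  finally show ?case .
qed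

section \<open>The three specialisations\<close>

definition trunc_sum :: "nat \<Rightarrow> nat \<Rightarrow> 'a \<Rightarrow> 'a \<Rightarrow> 'a \<Rightarrow> 'a \<Rightarrow> 'a :: field" where
  "trunc_sum d m a b c q = (\<Sum>k = 0..m. qpoch (a * q) (q ^ d) k * qpoch (q / a) (q ^ d) k * qpoch (q / b) (q ^ d) k
     / (qpoch (q ^ d) (q ^ d) k * qpoch c (q ^ d) k * qpoch (q ^ (d + 3) / (b * c)) (q ^ d) k) * (q ^ d) ^ k)"

definition closed_form :: "nat \<Rightarrow> nat \<Rightarrow> nat \<Rightarrow> 'a \<Rightarrow> 'a \<Rightarrow> 'a \<Rightarrow> 'a \<Rightarrow> 'a :: field" where
  "closed_form d m N a b c q =
     (1 - a * q ^ N) * (a - q ^ N) / ((a - b) * (1 - a * b))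
       * (qpoch (c / (a * q)) (q ^ d) m * qpoch (a * c / q) (q ^ d) m)
       / (qpoch c (q ^ d) m * qpoch (c / q ^ 2) (q ^ d) m)
   + (b - q ^ N) * (a * b - 1 - a ^ 2 + a * q ^ N) / ((a - b) * (1 - a * b))
       * ((q / b) ^ m * qpoch (b * c / q) (q ^ d) m * qpoch (q ^ (d + 2) / c) (q ^ d) m)
       / (qpoch c (q ^ d) m * qpoch (q ^ (d + 3) / (b * c)) (q ^ d) m)"

lemma trunc_sum_inverse_a: "trunc_sum d m (1 / a) b c q = trunc_sum d m a b c q"
  unfolding trunc_sum_def by (rule sum.cong) (simp_all add: mult_ac)

lemma trunc_sum_eq_closed_form_b:
  fixes a c q :: "'a :: field"
  assumes nz: "a \<noteq> 0" "c \<noteq> 0" "q \<noteq> 0"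
    and N: "q ^ N = q * (q ^ d) ^ m"
    and "a - q ^ N \<noteq> 0" "1 - a * q ^ N \<noteq> 0"
    and hP: "\<forall>i<m. 1 - q ^ d * (q ^ d) ^ i \<noteq> 0" and hC: "\<forall>i<m. 1 - c * (q ^ d) ^ i \<noteq> 0"
    and hD: "\<forall>n\<le>m. \<forall>i\<le>m. 1 - (a * q) * (q / a) * q ^ d / (c * (q ^ d) ^ n) * (q ^ d) ^ i \<noteq> 0"
    and hE: "\<forall>n<m. 1 - c * (q ^ d) ^ n / ((a * q) * (q / a)) \<noteq> 0"
  shows "trunc_sum d m a (q ^ N) c q = closed_form d m N a (q ^ N) c q"
proof -
  let ?p = "q ^ d"
  have e1: "q / q ^ N = 1 / ?p ^ m"
    using nz by (simp add: N)
  have e2: "q ^ (d + 3) / (q ^ N * c) = (a * q) * (q / a) * ?p / (c * ?p ^ m)"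
    using nz by (simp add: N power_add field_simps power2_eq_square numeral_3_eq_3)
  have "trunc_sum d m a (q ^ N) c q = (\<Sum>k=0..m. saal_term (a * q) (q / a) c ?p m k)"
    unfolding trunc_sum_def saal_term_def e1 e2 ..
  also have "\<dots> = qpoch (c / (a * q)) ?p m * qpoch (c / (q / a)) ?p m
      / (qpoch c ?p m * qpoch (c / ((a * q) * (q / a))) ?p m)"
    by (rule q_saalschuetz[OF _ _ nz(2) _ hP hC hD hE]) (use nz in auto)
  also have "\<dots> = closed_form d m N a (q ^ N) c q"
  proof -
    have args: "c / (q / a) = a * c / q" "c / ((a * q) * (q / a)) = c / q ^ 2"
      using nz by (simp_all add: field_simps power2_eq_square)
    have cancel: "(1 - a * q ^ N) * (a - q ^ N) / ((a - q ^ N) * (1 - a * q ^ N)) = 1"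
      using assms(5,6) by simp
    show ?thesis
      unfolding closed_form_def args cancel by simp
  qed
  finally show ?thesis .
qed

lemma trunc_sum_eq_closed_form_a:
  fixes b c q :: "'a :: field"
  assumes nz: "b \<noteq> 0" "c \<noteq> 0" "q \<noteq> 0"
    and N: "q ^ N = q * (q ^ d) ^ m"
    and "q ^ N - b \<noteq> 0" "1 - q ^ N * b \<noteq> 0"
    and hP: "\<forall>i<m. 1 - q ^ d * (q ^ d) ^ i \<noteq> 0" and hC: "\<forall>i<m. 1 - c * (q ^ d) ^ i \<noteq> 0"
    and hD: "\<forall>n\<le>m. \<forall>i\<le>m. 1 - (q ^ N * q) * (q / b) * q ^ d / (c * (q ^ d) ^ n) * (q ^ d) ^ i \<noteq> 0"
    and hE: "\<forall>n<m. 1 - c * (q ^ d) ^ n / ((q ^ N * q) * (q / b)) \<noteq> 0"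
  shows "trunc_sum d m (q ^ N) b c q = closed_form d m N (q ^ N) b c q"
proof -
  let ?p = "q ^ d" and ?Q = "q ^ N"
  have e1: "q / ?Q = 1 / ?p ^ m"
    using nz by (simp add: N)
  have e2: "q ^ (d + 3) / (b * c) = (?Q * q) * (q / b) * ?p / (c * ?p ^ m)"
    using nz by (simp add: N power_add field_simps power2_eq_square numeral_3_eq_3)
  have "trunc_sum d m ?Q b c q = (\<Sum>k=0..m. saal_term (?Q * q) (q / b) c ?p m k)"
    unfolding trunc_sum_def saal_term_def e1 e2 by (rule sum.cong) (simp_all add: mult_ac)
  also have "\<dots> = qpoch (c / (?Q * q)) ?p m / qpoch (c / ((?Q * q) * (q / b))) ?p m
      * qpoch (c / (q / b)) ?p m / qpoch c ?p m"
    by (subst q_saalschuetz[OF _ _ nz(2) _ hP hC hD hE]) (use nz in \<open>auto simp: field_simps\<close>)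
  also have "qpoch (c / (?Q * q)) ?p m / qpoch (c / ((?Q * q) * (q / b))) ?p m
      = (q / b) ^ m * (qpoch (q ^ (d + 2) / c) ?p m / qpoch (q ^ (d + 3) / (b * c)) ?p m)"
  proof -
    have "(c / (?Q * q)) / (c / ((?Q * q) * (q / b))) = q / b"
      using nz by (simp add: field_simps)
    moreover have "?p ^ m = ?p * ?p ^ (m - 1)" if "0 < m"
      using that by (simp flip: power_Suc)
    ultimately show ?thesis
      using nz unfolding N
      by (subst qpoch_ratio_reverse) (auto simp: power_add field_simps power2_eq_square numeral_3_eq_3)
  qed
  also have "\<dots> * qpoch (c / (q / b)) ?p m / qpoch c ?p m = closed_form d m N ?Q b c q"
  proof -
    have "(b - ?Q) * (?Q * b - 1 - ?Q ^ 2 + ?Q * ?Q) = (?Q - b) * (1 - ?Q * b)"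
      by (simp add: algebra_simps power2_eq_square)
    then show ?thesis
      using assms(5,6) nz by (simp add: closed_form_def divide_inverse mult_ac)
  qed
  finally show ?thesis .
qed

lemma trunc_sum_eq_closed_form_inverse_a:
  fixes b c q :: "'a :: field"
  assumes nz: "b \<noteq> 0" "c \<noteq> 0" "q \<noteq> 0"
    and N: "q ^ N = q * (q ^ d) ^ m"
    and "q ^ N - b \<noteq> 0" "1 - q ^ N * b \<noteq> 0"
    and "\<forall>i<m. 1 - q ^ d * (q ^ d) ^ i \<noteq> 0" and "\<forall>i<m. 1 - c * (q ^ d) ^ i \<noteq> 0"
    and "\<forall>n\<le>m. \<forall>i\<le>m. 1 - (q ^ N * q) * (q / b) * q ^ d / (c * (q ^ d) ^ n) * (q ^ d) ^ i \<noteq> 0"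
    and "\<forall>n<m. 1 - c * (q ^ d) ^ n / ((q ^ N * q) * (q / b)) \<noteq> 0"
  shows "trunc_sum d m (1 / q ^ N) b c q = closed_form d m N (1 / q ^ N) b c q"
proof -
  let ?Q = "q ^ N"
  have "?Q \<noteq> 0" using nz by simp
  have "trunc_sum d m (1 / ?Q) b c q = closed_form d m N ?Q b c q"
    unfolding trunc_sum_inverse_a by (rule trunc_sum_eq_closed_form_a[OF assms])
  also have "\<dots> = closed_form d m N (1 / ?Q) b c q"
  proof -
    have "(b - ?Q) * (?Q * b - 1 - ?Q ^ 2 + ?Q * ?Q) = (?Q - b) * (1 - ?Q * b)"
      by (simp add: algebra_simps power2_eq_square)
    then have first: "(b - ?Q) * (?Q * b - 1 - ?Q ^ 2 + ?Q * ?Q) / ((?Q - b) * (1 - ?Q * b)) = 1"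
      using assms(5,6) by simp
    have "(1 / ?Q - b) * (1 - 1 / ?Q * b) = (1 - ?Q * b) * (?Q - b) / (?Q * ?Q)"
      using nz(3) by (simp add: field_simps)
    then have "(1 / ?Q - b) * (1 - 1 / ?Q * b) \<noteq> 0"
      using assms(5,6) \<open>?Q \<noteq> 0\<close> by simp
    moreover have "(b - ?Q) * (1 / ?Q * b - 1 - (1 / ?Q) ^ 2 + 1 / ?Q * ?Q) = (1 / ?Q - b) * (1 - 1 / ?Q * b)"
      using nz(3) by (simp add: field_simps power2_eq_square)
    ultimately have second: "(b - ?Q) * (1 / ?Q * b - 1 - (1 / ?Q) ^ 2 + 1 / ?Q * ?Q) / ((1 / ?Q - b) * (1 - 1 / ?Q * b)) = 1"
      by simp
    show ?thesis
      unfolding closed_form_def first second using \<open>?Q \<noteq> 0\<close> by simp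
  qed
  finally show ?thesis .
qed

section \<open>Substitution homomorphisms and their kernels\<close>

definition is_ring_hom :: "('a :: comm_ring_1 \<Rightarrow> 'b :: comm_ring_1) \<Rightarrow> bool" where
  "is_ring_hom f \<longleftrightarrow> f 1 = 1 \<and> (\<forall>x y. f (x + y) = f x + f y) \<and> (\<forall>x y. f (x * y) = f x * f y)"

context
  fixes f :: "'a :: comm_ring_1 \<Rightarrow> 'b :: comm_ring_1"
  assumes hom: "is_ring_hom f"
begin

lemma ring_hom_1: "f 1 = 1"
  using hom by (simp add: is_ring_hom_def)

lemma ring_hom_add: "f (x + y) = f x + f y"
  using hom by (simp add: is_ring_hom_def)

lemma ring_hom_mult: "f (x * y) = f x * f y"
  using hom by (simp add: is_ring_hom_def)

lemma ring_hom_0: "f 0 = 0"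
  using ring_hom_add[of 0 0] by simp

lemma ring_hom_uminus: "f (- x) = - f x"
  using ring_hom_add[of "- x" x] ring_hom_0 by (simp add: eq_neg_iff_add_eq_0)

lemma ring_hom_diff: "f (x - y) = f x - f y"
  using ring_hom_add[of x "- y"] ring_hom_uminus[of y] by simp

lemma ring_hom_power: "f (x ^ n) = f x ^ n"
  by (induction n) (simp_all add: ring_hom_1 ring_hom_mult)

lemma ring_hom_sum: "f (sum g A) = (\<Sum>i\<in>A. f (g i))"
  by (induction A rule: infinite_finite_induct) (simp_all add: ring_hom_0 ring_hom_add)

lemma map_poly_ring_hom_add: "map_poly f (p + q) = map_poly f p + map_poly f q"
  by (intro poly_eqI) (simp add: coeff_map_poly ring_hom_0 ring_hom_add)

lemma map_poly_ring_hom_mult: "map_poly f (p * q) = map_poly f p * map_poly f q"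
  by (intro poly_eqI) (simp add: coeff_map_poly ring_hom_0 coeff_mult ring_hom_sum ring_hom_mult)

end

lemmas ring_hom_simps = ring_hom_1 ring_hom_add ring_hom_mult ring_hom_0 ring_hom_diff ring_hom_power

definition eval_poly :: "('a :: comm_ring_1 \<Rightarrow> 'b :: comm_ring_1) \<Rightarrow> 'b \<Rightarrow> 'a poly \<Rightarrow> 'b" where
  "eval_poly f x p = poly (map_poly f p) x"

lemma is_ring_hom_eval_poly: "is_ring_hom f \<Longrightarrow> is_ring_hom (eval_poly f x)"
  unfolding is_ring_hom_def eval_poly_def
  by (simp add: map_poly_ring_hom_add map_poly_ring_hom_mult map_poly_1'[of f] ring_hom_1 is_ring_hom_def)

lemma eval_poly_const [simp]: "is_ring_hom f \<Longrightarrow> eval_poly f x [:a:] = f a"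
  by (simp add: eval_poly_def map_poly_pCons ring_hom_0)

lemma eval_poly_X [simp]: "is_ring_hom f \<Longrightarrow> eval_poly f x [:0, 1:] = x"
  by (simp add: eval_poly_def map_poly_pCons ring_hom_0 ring_hom_1)

definition eval4 :: "(complex \<Rightarrow> 'k :: comm_ring_1) \<Rightarrow> 'k \<Rightarrow> 'k \<Rightarrow> 'k \<Rightarrow> 'k \<Rightarrow> mpoly4 \<Rightarrow> 'k" where
  "eval4 f xa xb xc xq = eval_poly (eval_poly (eval_poly (eval_poly f xa) xb) xc) xq"

lemma is_ring_hom_eval4: "is_ring_hom f \<Longrightarrow> is_ring_hom (eval4 f xa xb xc xq)"
  unfolding eval4_def by (intro is_ring_hom_eval_poly)

lemma
  assumes "is_ring_hom f"
  shows eval4_va [simp]: "eval4 f xa xb xc xq va = xa"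
    and eval4_vb [simp]: "eval4 f xa xb xc xq vb = xb"
    and eval4_vc [simp]: "eval4 f xa xb xc xq vc = xc"
    and eval4_vq [simp]: "eval4 f xa xb xc xq vq = xq"
    and eval4_const [simp]: "eval4 f xa xb xc xq [:[:[:[:z:]:]:]:] = f z"
  using assms
  by (simp_all add: eval4_def va_def vb_def vc_def vq_def is_ring_hom_eval_poly ring_hom_0 ring_hom_1)

lemma pCons_eq_const_plus_X: "pCons z p = [:z:] + [:0, 1:] * (p :: 'a :: comm_ring_1 poly)"
  by (simp add: poly_eq_iff coeff_pCons split: nat.split)

lemma mpoly4_induct [case_names add mult const a b c q]:
  assumes add: "\<And>x y. P x \<Longrightarrow> P y \<Longrightarrow> P (x + y)" and mult: "\<And>x y. P x \<Longrightarrow> P y \<Longrightarrow> P (x * y)"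
    and const: "\<And>z. P [:[:[:[:z:]:]:]:]" and a: "P va" and b: "P vb" and c: "P vc" and q: "P vq"
  shows "P (g :: mpoly4)"
proof -
  have P_a: "P [:[:[:p:]:]:]" for p
  proof (induction p)
    case (pCons z p)
    have "[:[:[:pCons z p:]:]:] = [:[:[:[:z:]:]:]:] + va * [:[:[:p:]:]:]"
      by (subst pCons_eq_const_plus_X) (simp add: va_def)
    then show ?case by (metis add mult const a pCons.IH)
  qed (use const[of 0] in simp)
  have P_ab: "P [:[:h:]:]" for h
  proof (induction h)
    case (pCons z p)
    have "[:[:pCons z p:]:] = [:[:[:z:]:]:] + vb * [:[:p:]:]"
      by (subst pCons_eq_const_plus_X) (simp add: vb_def)
    then show ?case by (metis add mult P_a b pCons.IH)
  qed (use P_a[of 0] in simp)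
  have P_abc: "P [:h:]" for h
  proof (induction h)
    case (pCons z p)
    have "[:pCons z p:] = [:[:z:]:] + vc * [:p:]"
      by (subst pCons_eq_const_plus_X) (simp add: vc_def)
    then show ?case by (metis add mult P_ab c pCons.IH)
  qed (use P_ab[of 0] in simp)
  show "P g"
  proof (induction g)
    case (pCons z p)
    have "pCons z p = [:z:] + vq * p"
      by (subst pCons_eq_const_plus_X) (simp add: vq_def)
    then show ?case by (metis add mult P_abc q pCons.IH)
  qed (use P_abc[of 0] in simp)
qed

lemma rf_add: "rf (x + y) = rf x + rf y"
  by (simp add: rf_def)

lemma rf_mult: "rf (x * y) = rf x * rf y"
  by (simp add: rf_def)

lemma rf_1: "rf 1 = 1"
  by (simp add: rf_def One_fract_def)

lemma is_ring_hom_rf: "is_ring_hom rf"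
  by (simp add: is_ring_hom_def rf_add rf_mult rf_1)

lemma rf_eq_iff: "rf x = rf y \<longleftrightarrow> x = y"
  by (simp add: rf_def eq_fract)

lemma rf_eq_0_iff: "rf x = 0 \<longleftrightarrow> x = 0"
  using rf_eq_iff[of x 0] by (simp add: ring_hom_0[OF is_ring_hom_rf])

lemmas rf_simps = ring_hom_simps[OF is_ring_hom_rf]

lemma is_ring_hom_rf_const: "is_ring_hom (\<lambda>z. rf [:[:[:[:z:]:]:]:])"
  by (simp add: is_ring_hom_def flip: rf_add rf_mult) (simp add: pCons_one rf_1)

definition subst_ab :: "ratfun4 \<Rightarrow> ratfun4 \<Rightarrow> mpoly4 \<Rightarrow> ratfun4" where
  "subst_ab xa xb = eval4 (\<lambda>z. rf [:[:[:[:z:]:]:]:]) xa xb (rf vc) (rf vq)"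

lemma is_ring_hom_subst_ab: "is_ring_hom (subst_ab xa xb)"
  unfolding subst_ab_def by (rule is_ring_hom_eval4[OF is_ring_hom_rf_const])

lemmas subst_ab_simps = ring_hom_simps[OF is_ring_hom_subst_ab]

lemma subst_ab_vars [simp]:
  "subst_ab xa xb va = xa" "subst_ab xa xb vb = xb" "subst_ab xa xb vc = rf vc" "subst_ab xa xb vq = rf vq"
  "subst_ab xa xb [:[:[:[:z:]:]:]:] = rf [:[:[:[:z:]:]:]:]"
  by (simp_all add: subst_ab_def is_ring_hom_rf_const)

lemma add_diff_decomp:
  fixes x y x' y' \<alpha> \<beta> :: "'a :: comm_ring_1"
  assumes "x - x' = \<alpha> * s1 + \<beta> * t1" "y - y' = \<alpha> * s2 + \<beta> * t2"
  shows "(x + y) - (x' + y') = \<alpha> * (s1 + s2) + \<beta> * (t1 + t2)"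
proof -
  have "(x + y) - (x' + y') = (x - x') + (y - y')"
    by simp
  then show ?thesis
    unfolding assms by (simp add: algebra_simps)
qed

lemma mult_diff_decomp:
  fixes x y x' y' \<alpha> \<beta> :: "'a :: comm_ring_1"
  assumes "x - x' = \<alpha> * s1 + \<beta> * t1" "y - y' = \<alpha> * s2 + \<beta> * t2"
  shows "x * y - x' * y' = \<alpha> * (s1 * y + x' * s2) + \<beta> * (t1 * y + x' * t2)"
proof -
  have "x * y - x' * y' = (x - x') * y + x' * (y - y')"
    by (simp add: algebra_simps)
  then show ?thesis
    unfolding assms by (simp add: algebra_simps)
qed

lemma rf_minus_subst_ab:
  assumes S: "range rf \<subseteq> S" "xa \<in> S" "xb \<in> S"
    and add_closed: "\<And>u v. u \<in> S \<Longrightarrow> v \<in> S \<Longrightarrow> u + v \<in> S"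
    and mult_closed: "\<And>u v. u \<in> S \<Longrightarrow> v \<in> S \<Longrightarrow> u * v \<in> S"
  shows "subst_ab xa xb g \<in> S \<and> (\<exists>s\<in>S. \<exists>t\<in>S. rf g - subst_ab xa xb g = (rf va - xa) * s + (rf vb - xb) * t)"
proof -
  have "0 \<in> S" "1 \<in> S"
    using S(1) rangeI[of rf 0] rangeI[of rf 1] by (auto simp: rf_simps)
  then have generator: "subst_ab xa xb g \<in> S \<and> (\<exists>s\<in>S. \<exists>t\<in>S. rf g - subst_ab xa xb g = (rf va - xa) * s + (rf vb - xb) * t)"
    if "subst_ab xa xb g \<in> S" "rf g - subst_ab xa xb g = (rf va - xa) * s + (rf vb - xb) * t" "s \<in> {0, 1}" "t \<in> {0, 1}"
    for g s t
    using that by blast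
  show ?thesis
  proof (induction g rule: mpoly4_induct)
    case (add g h)
    then obtain s1 t1 s2 t2 where "s1 \<in> S" "t1 \<in> S" "s2 \<in> S" "t2 \<in> S"
      and g_eq: "rf g - subst_ab xa xb g = (rf va - xa) * s1 + (rf vb - xb) * t1"
      and h_eq: "rf h - subst_ab xa xb h = (rf va - xa) * s2 + (rf vb - xb) * t2"
      by blast
    moreover have "subst_ab xa xb g + subst_ab xa xb h \<in> S"
      using add.IH add_closed by blast
    ultimately show ?case
      unfolding rf_add subst_ab_simps(2) using add_diff_decomp[OF g_eq h_eq] add_closed by blast
  next
    case (mult g h)
    then obtain s1 t1 s2 t2 where "s1 \<in> S" "t1 \<in> S" "s2 \<in> S" "t2 \<in> S"
      and g_eq: "rf g - subst_ab xa xb g = (rf va - xa) * s1 + (rf vb - xb) * t1"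
      and h_eq: "rf h - subst_ab xa xb h = (rf va - xa) * s2 + (rf vb - xb) * t2"
      by blast
    moreover have "subst_ab xa xb g \<in> S" "subst_ab xa xb h \<in> S" "rf h \<in> S"
      using mult.IH S(1) by blast+
    ultimately have "s1 * rf h + subst_ab xa xb g * s2 \<in> S" "t1 * rf h + subst_ab xa xb g * t2 \<in> S"
      "subst_ab xa xb g * subst_ab xa xb h \<in> S"
      by (simp_all add: add_closed mult_closed)
    then show ?case
      unfolding rf_mult subst_ab_simps(3) using mult_diff_decomp[OF g_eq h_eq] by blast
  next
    case a
    show ?case by (rule generator[of _ 1 0]) (use S in simp_all)
  next
    case b
    show ?case by (rule generator[of _ 0 1]) (use S in simp_all)
  next
    case (const z)
    show ?case by (rule generator[of _ 0 0]) (use S in auto)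
  next
    case c
    show ?case by (rule generator[of _ 0 0]) (use S in auto)
  next
    case q
    show ?case by (rule generator[of _ 0 0]) (use S in auto)
  qed
qed

lemma range_rf_closed:
  assumes "u \<in> range rf" "v \<in> range rf"
  shows "u + v \<in> range rf" "u * v \<in> range rf"
proof -
  obtain g h where "u = rf g" "v = rf h"
    using assms by blast
  then show "u + v \<in> range rf" "u * v \<in> range rf"
    by (simp_all flip: rf_add rf_mult)
qed

lemma subst_a_qpower_eq_0_iff: "subst_ab (rf vq ^ N) (rf vb) g = 0 \<longleftrightarrow> (va - vq ^ N) dvd g"
proof
  assume "subst_ab (rf vq ^ N) (rf vb) g = 0"
  moreover have "rf vq ^ N \<in> range rf"
    by (metis rangeI rf_simps(6))
  ultimately obtain u where "rf g = (rf va - rf vq ^ N) * rf u"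
    using rf_minus_subst_ab[of "range rf" "rf vq ^ N" "rf vb" g] range_rf_closed by auto
  then have "g = (va - vq ^ N) * u"
    by (simp add: rf_simps flip: rf_eq_iff)
  then show "(va - vq ^ N) dvd g" by simp
qed (erule dvdE, simp add: subst_ab_simps)

lemma subst_b_qpower_eq_0_iff: "subst_ab (rf va) (rf vq ^ N) g = 0 \<longleftrightarrow> (vb - vq ^ N) dvd g"
proof
  assume "subst_ab (rf va) (rf vq ^ N) g = 0"
  moreover have "rf vq ^ N \<in> range rf"
    by (metis rangeI rf_simps(6))
  ultimately obtain u where "rf g = (rf vb - rf vq ^ N) * rf u"
    using rf_minus_subst_ab[of "range rf" "rf va" "rf vq ^ N" g] range_rf_closed by auto
  then have "g = (vb - vq ^ N) * u"
    by (simp add: rf_simps flip: rf_eq_iff)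
  then show "(vb - vq ^ N) dvd g" by simp
qed (erule dvdE, simp add: subst_ab_simps)

lemma coprime_1_minus_va_vq_power:
  assumes "N > 0"
  shows "coprime (1 - va * vq ^ N) (vq ^ k)"
proof -
  have "coprime (1 - va * vq ^ N) vq"
  proof (rule coprimeI)
    fix c assume "c dvd 1 - va * vq ^ N" "c dvd vq"
    moreover have "vq dvd va * vq ^ N"
      using assms by simp
    ultimately have "c dvd (1 - va * vq ^ N) + va * vq ^ N"
      by (meson dvd_add dvd_trans)
    then show "is_unit c" by simp
  qed
  then show ?thesis by simp
qed

definition q_localization :: "ratfun4 set" where
  "q_localization = {rf u / rf vq ^ k | u k. True}"

lemma rf_vq_power_neq_0: "rf vq ^ k \<noteq> 0"
  by (simp add: rf_eq_0_iff vq_def)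

lemma range_rf_subset_q_localization: "range rf \<subseteq> q_localization"
proof -
  have "rf u = rf u / rf vq ^ 0" for u
    by simp
  then show ?thesis
    unfolding q_localization_def by blast
qed

lemma inverse_q_power_in_q_localization: "1 / rf vq ^ N \<in> q_localization"
proof -
  have "1 / rf vq ^ N = rf 1 / rf vq ^ N"
    by (simp add: rf_1)
  then show ?thesis
    unfolding q_localization_def by blast
qed

lemma q_localization_closed:
  assumes "u \<in> q_localization" "v \<in> q_localization"
  shows "u + v \<in> q_localization" "u * v \<in> q_localization"
proof -
  obtain u1 k1 v1 k2 where "u = rf u1 / rf vq ^ k1" "v = rf v1 / rf vq ^ k2"
    using assms unfolding q_localization_def by blast
  then have "u + v = (rf u1 * rf vq ^ k2 + rf v1 * rf vq ^ k1) / (rf vq ^ k1 * rf vq ^ k2)"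
    and "u * v = rf u1 * rf v1 / (rf vq ^ k1 * rf vq ^ k2)"
    using rf_vq_power_neq_0 by (simp_all add: add_frac_eq)
  then have "u + v = rf (u1 * vq ^ k2 + v1 * vq ^ k1) / rf vq ^ (k1 + k2)"
    and "u * v = rf (u1 * v1) / rf vq ^ (k1 + k2)"
    by (simp_all add: rf_add rf_mult rf_simps(6) power_add)
  then show "u + v \<in> q_localization" "u * v \<in> q_localization"
    unfolding q_localization_def by blast+
qed

lemma subst_a_inverse_qpower_eq_0_iff:
  assumes "N > 0"
  shows "subst_ab (1 / rf vq ^ N) (rf vb) g = 0 \<longleftrightarrow> (1 - va * vq ^ N) dvd g"
proof
  assume "subst_ab (1 / rf vq ^ N) (rf vb) g = 0"
  moreover have "rf vb \<in> q_localization"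
    using range_rf_subset_q_localization by blast
  ultimately obtain s where "s \<in> q_localization" "rf g = (rf va - 1 / rf vq ^ N) * s"
    using rf_minus_subst_ab[where g = g and xb = "rf vb", OF range_rf_subset_q_localization
        inverse_q_power_in_q_localization[of N] _ q_localization_closed] by auto
  then obtain u k where "rf g = (rf va - 1 / rf vq ^ N) * (rf u / rf vq ^ k)"
    unfolding q_localization_def by blast
  then have "rf g * rf vq ^ (N + k) = (rf va * rf vq ^ N - 1) * rf u"
    using rf_vq_power_neq_0 by (simp add: field_simps power_add)
  then have "rf (g * vq ^ (N + k)) = rf ((va * vq ^ N - 1) * u)"
    by (simp add: rf_mult rf_simps(5,6) rf_1)
  then have "g * vq ^ (N + k) = (1 - va * vq ^ N) * (- u)"
    by (simp add: rf_eq_iff algebra_simps)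
  then have "(1 - va * vq ^ N) dvd g * vq ^ (N + k)"
    by (metis dvd_triv_left)
  moreover have "coprime (1 - va * vq ^ N) (vq ^ (N + k))"
    by (rule coprime_1_minus_va_vq_power[OF assms])
  ultimately show "(1 - va * vq ^ N) dvd g"
    by (simp add: coprime_dvd_mult_left_iff)
next
  assume "(1 - va * vq ^ N) dvd g"
  then obtain u where "g = (1 - va * vq ^ N) * u" ..
  moreover have "rf vq ^ N \<noteq> 0"
    by (rule rf_vq_power_neq_0)
  then have "subst_ab (1 / rf vq ^ N) (rf vb) (1 - va * vq ^ N) = 0"
    by (simp only: subst_ab_simps subst_ab_vars) simp
  ultimately show "subst_ab (1 / rf vq ^ N) (rf vb) g = 0"
    by (metis subst_ab_simps(3) mult_zero_left)
qed

section \<open>Values of rational functions and the congruence\<close>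

lemma prime_elem_of_kernel:
  fixes \<phi> :: "'a :: idom \<Rightarrow> 'k :: field"
  assumes hom: "is_ring_hom \<phi>" and ker: "\<And>g. \<phi> g = 0 \<longleftrightarrow> f dvd g" and "f \<noteq> 0"
  shows "prime_elem f"
proof (rule prime_elemI[OF \<open>f \<noteq> 0\<close>])
  show "\<not> f dvd 1"
    using ker[of 1] ring_hom_1[OF hom] by simp
  fix a b
  assume "f dvd a * b"
  then show "f dvd a \<or> f dvd b"
    using ker ring_hom_mult[OF hom] by (metis divisors_zero)
qed

lemma coprime_of_kernel:
  fixes \<phi> :: "'a :: factorial_ring_gcd \<Rightarrow> 'k :: field"
  assumes "is_ring_hom \<phi>" "\<And>g. \<phi> g = 0 \<longleftrightarrow> f dvd g" "f \<noteq> 0" "\<phi> h \<noteq> 0"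
  shows "coprime h f"
  using prime_elem_imp_coprime[OF prime_elem_of_kernel[OF assms(1-3)], of h] assms(2,4)
  by (simp add: coprime_commute)

text \<open>The partial extension of \<open>\<phi>\<close> to the rational functions whose denominator avoids its kernel.\<close>

definition evals_to :: "(mpoly4 \<Rightarrow> 'k :: field) \<Rightarrow> ratfun4 \<Rightarrow> 'k \<Rightarrow> bool" where
  "evals_to \<phi> x v \<longleftrightarrow> is_ring_hom \<phi> \<and> (\<exists>n d. x = Fract n d \<and> \<phi> d \<noteq> 0 \<and> v = \<phi> n / \<phi> d)"

lemma evals_to_rf: "is_ring_hom \<phi> \<Longrightarrow> evals_to \<phi> (rf g) (\<phi> g)"
  unfolding evals_to_def rf_def by (intro conjI exI[of _ g] exI[of _ 1]) (simp_all add: ring_hom_1)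

lemma evals_to_1: "is_ring_hom \<phi> \<Longrightarrow> evals_to \<phi> 1 1"
  using evals_to_rf[of \<phi> 1] by (simp add: rf_1 ring_hom_1)

lemma evals_to_is_ring_hom: "evals_to \<phi> x v \<Longrightarrow> is_ring_hom \<phi>"
  by (simp add: evals_to_def)

lemma evals_to_add:
  assumes "evals_to \<phi> x v" "evals_to \<phi> y w"
  shows "evals_to \<phi> (x + y) (v + w)"
proof -
  from assms obtain n d n' d' where hom: "is_ring_hom \<phi>" and "x = Fract n d" "\<phi> d \<noteq> 0" "v = \<phi> n / \<phi> d"
    "y = Fract n' d'" "\<phi> d' \<noteq> 0" "w = \<phi> n' / \<phi> d'"
    unfolding evals_to_def by blast
  moreover from this have "d \<noteq> 0" "d' \<noteq> 0"
    by (auto simp: ring_hom_0)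
  ultimately have "x + y = Fract (n * d' + n' * d) (d * d')" "\<phi> (d * d') \<noteq> 0"
    "v + w = \<phi> (n * d' + n' * d) / \<phi> (d * d')"
    by (simp_all add: ring_hom_mult ring_hom_add field_simps)
  then show ?thesis
    unfolding evals_to_def using hom by blast
qed

lemma evals_to_mult:
  assumes "evals_to \<phi> x v" "evals_to \<phi> y w"
  shows "evals_to \<phi> (x * y) (v * w)"
proof -
  from assms obtain n d n' d' where hom: "is_ring_hom \<phi>" and "x = Fract n d" "\<phi> d \<noteq> 0" "v = \<phi> n / \<phi> d"
    "y = Fract n' d'" "\<phi> d' \<noteq> 0" "w = \<phi> n' / \<phi> d'"
    unfolding evals_to_def by blast
  then have "x * y = Fract (n * n') (d * d')" "\<phi> (d * d') \<noteq> 0" "v * w = \<phi> (n * n') / \<phi> (d * d')"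
    by (simp_all add: ring_hom_mult)
  then show ?thesis
    unfolding evals_to_def using hom by blast
qed

lemma evals_to_uminus:
  assumes "evals_to \<phi> x v"
  shows "evals_to \<phi> (- x) (- v)"
proof -
  from assms obtain n d where hom: "is_ring_hom \<phi>" and "x = Fract n d" "\<phi> d \<noteq> 0" "v = \<phi> n / \<phi> d"
    unfolding evals_to_def by blast
  then have "- x = Fract (- n) d" "- v = \<phi> (- n) / \<phi> d"
    by (simp_all add: ring_hom_uminus)
  then show ?thesis
    unfolding evals_to_def using hom \<open>\<phi> d \<noteq> 0\<close> by blast
qed

lemma evals_to_diff: "evals_to \<phi> x v \<Longrightarrow> evals_to \<phi> y w \<Longrightarrow> evals_to \<phi> (x - y) (v - w)"
  using evals_to_add[of \<phi> x v "- y" "- w"] evals_to_uminus[of \<phi> y w] by simp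

lemma evals_to_divide:
  assumes "evals_to \<phi> x v" "evals_to \<phi> y w" "w \<noteq> 0"
  shows "evals_to \<phi> (x / y) (v / w)"
proof -
  from assms obtain n d n' d' where hom: "is_ring_hom \<phi>" and "x = Fract n d" "\<phi> d \<noteq> 0" "v = \<phi> n / \<phi> d"
    "y = Fract n' d'" "\<phi> d' \<noteq> 0" "w = \<phi> n' / \<phi> d'"
    unfolding evals_to_def by blast
  moreover from this have "\<phi> n' \<noteq> 0"
    using \<open>w \<noteq> 0\<close> by auto
  ultimately have "x / y = Fract (n * d') (d * n')" "\<phi> (d * n') \<noteq> 0" "v / w = \<phi> (n * d') / \<phi> (d * n')"
    by (simp_all add: ring_hom_mult)
  then show ?thesis
    unfolding evals_to_def using hom by blast
qed

lemma evals_to_power: "evals_to \<phi> x v \<Longrightarrow> evals_to \<phi> (x ^ k) (v ^ k)"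
  by (induction k) (simp_all add: evals_to_1 evals_to_is_ring_hom evals_to_mult)

lemma evals_to_qpoch: "evals_to \<phi> x v \<Longrightarrow> evals_to \<phi> y w \<Longrightarrow> evals_to \<phi> (qpoch x y k) (qpoch v w k)"
  by (induction k)
    (simp_all add: qpoch_Suc evals_to_1 evals_to_is_ring_hom evals_to_mult evals_to_diff evals_to_power)

lemma evals_to_sum:
  "is_ring_hom \<phi> \<Longrightarrow> (\<And>k. k \<in> A \<Longrightarrow> evals_to \<phi> (f k) (g k)) \<Longrightarrow> evals_to \<phi> (sum f A) (sum g A)"
  using evals_to_rf[of \<phi> 0]
  by (induction A rule: infinite_finite_induct) (simp_all add: evals_to_add ring_hom_0 rf_simps)

lemma nonzero_if_evals_to_nonzero:
  assumes "evals_to \<phi> x v" "v \<noteq> 0"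
  shows "x \<noteq> 0"
proof
  assume "x = 0"
  from assms obtain n d where "is_ring_hom \<phi>" "x = Fract n d" "\<phi> d \<noteq> 0" "v = \<phi> n / \<phi> d"
    unfolding evals_to_def by blast
  moreover from this have "d \<noteq> 0"
    by (auto simp: ring_hom_0)
  ultimately have "n = 0"
    using \<open>x = 0\<close> by (simp add: Zero_fract_def eq_fract)
  then show False
    using assms(2) \<open>is_ring_hom \<phi>\<close> \<open>v = \<phi> n / \<phi> d\<close> by (simp add: ring_hom_0)
qed

lemmas evals_to_rules = evals_to_add evals_to_mult evals_to_diff evals_to_divide evals_to_power evals_to_qpoch

lemma evals_to_trunc_sum:
  assumes "evals_to \<phi> xa \<alpha>" "evals_to \<phi> xb \<beta>" "evals_to \<phi> xc \<gamma>" "evals_to \<phi> xq \<kappa>"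
    and "\<alpha> \<noteq> 0" "\<beta> \<noteq> 0" "\<gamma> \<noteq> 0"
    and "\<forall>k\<le>m. qpoch (\<kappa> ^ d) (\<kappa> ^ d) k * qpoch \<gamma> (\<kappa> ^ d) k * qpoch (\<kappa> ^ (d + 3) / (\<beta> * \<gamma>)) (\<kappa> ^ d) k \<noteq> 0"
  shows "evals_to \<phi> (trunc_sum d m xa xb xc xq) (trunc_sum d m \<alpha> \<beta> \<gamma> \<kappa>)"
  unfolding trunc_sum_def using assms
  by (intro evals_to_sum evals_to_rules) (auto intro: evals_to_is_ring_hom)

lemma evals_to_closed_form:
  assumes "evals_to \<phi> xa \<alpha>" "evals_to \<phi> xb \<beta>" "evals_to \<phi> xc \<gamma>" "evals_to \<phi> xq \<kappa>"
    and "(\<alpha> - \<beta>) * (1 - \<alpha> * \<beta>) \<noteq> 0" "\<alpha> \<noteq> 0" "\<beta> \<noteq> 0" "\<gamma> \<noteq> 0" "\<kappa> \<noteq> 0"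
      "qpoch \<gamma> (\<kappa> ^ d) m * qpoch (\<gamma> / \<kappa> ^ 2) (\<kappa> ^ d) m \<noteq> 0"
      "qpoch \<gamma> (\<kappa> ^ d) m * qpoch (\<kappa> ^ (d + 3) / (\<beta> * \<gamma>)) (\<kappa> ^ d) m \<noteq> 0"
  shows "evals_to \<phi> (closed_form d m N xa xb xc xq) (closed_form d m N \<alpha> \<beta> \<gamma> \<kappa>)"
  unfolding closed_form_def using assms
  by (intro evals_to_rules evals_to_1) (auto intro: evals_to_is_ring_hom)

lemma fract_coprime_cases:
  obtains n d :: "'a :: factorial_ring_gcd" where "x = Fract n d" "d \<noteq> 0" "coprime n d"
proof -
  obtain n0 d0 where "x = Fract n0 d0" "d0 \<noteq> 0"
    by (cases x) auto
  moreover define g where "g = gcd n0 d0"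
  ultimately have "g \<noteq> 0" "n0 = g * (n0 div g)" "d0 = g * (d0 div g)"
    by simp_all
  then have "Fract n0 d0 = Fract (n0 div g) (d0 div g)"
    by (metis mult_fract_cancel)
  moreover have "d0 div g \<noteq> 0" "coprime (n0 div g) (d0 div g)"
    using \<open>d0 \<noteq> 0\<close> \<open>d0 = g * (d0 div g)\<close> unfolding g_def by (metis mult_zero_right, simp add: div_gcd_coprime)
  ultimately show ?thesis
    using that \<open>x = Fract n0 d0\<close> by metis
qed

text \<open>The kernels are prime ideals, so the last three hypotheses make the \<open>f\<^sub>i\<close> pairwise coprime.\<close>

lemma rf_cong_of_kernels:
  fixes \<phi>1 \<phi>2 \<phi>3 :: "mpoly4 \<Rightarrow> 'k :: field"
  assumes ker1: "\<And>g. \<phi>1 g = 0 \<longleftrightarrow> f1 dvd g" and ker2: "\<And>g. \<phi>2 g = 0 \<longleftrightarrow> f2 dvd g"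
    and ker3: "\<And>g. \<phi>3 g = 0 \<longleftrightarrow> f3 dvd g"
    and nz: "f1 \<noteq> 0" "f2 \<noteq> 0" "f3 \<noteq> 0"
    and ev: "evals_to \<phi>1 (A - B) 0" "evals_to \<phi>2 (A - B) 0" "evals_to \<phi>3 (A - B) 0"
    and coprime: "\<phi>1 f2 \<noteq> 0" "\<phi>1 f3 \<noteq> 0" "\<phi>2 f3 \<noteq> 0"
  shows "rf_cong A B [f1, f2, f3]"
proof -
  obtain n d where nd: "A - B = Fract n d" "d \<noteq> 0" "coprime n d"
    using fract_coprime_cases by blast
  have factor: "f dvd n \<and> coprime d f"
    if ker: "\<And>g. \<phi> g = 0 \<longleftrightarrow> f dvd g" and "f \<noteq> 0" and ev: "evals_to \<phi> (A - B) 0"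
    for \<phi> :: "mpoly4 \<Rightarrow> 'k" and f
  proof -
    obtain n' d' where "A - B = Fract n' d'" "\<phi> d' \<noteq> 0" "\<phi> n' = 0"
      using ev by (auto simp: evals_to_def)
    have hom: "is_ring_hom \<phi>"
      using ev by (rule evals_to_is_ring_hom)
    then have "d' \<noteq> 0"
      using \<open>\<phi> d' \<noteq> 0\<close> by (auto simp: ring_hom_0)
    then have "n * d' = n' * d"
      using nd \<open>A - B = Fract n' d'\<close> by (simp add: eq_fract)
    moreover have "f dvd n'"
      using ker \<open>\<phi> n' = 0\<close> by blast
    ultimately have "f dvd n * d'"
      by (metis dvd_mult2)
    moreover have "coprime f d'"
      using coprime_of_kernel[OF hom ker \<open>f \<noteq> 0\<close> \<open>\<phi> d' \<noteq> 0\<close>] by (simp add: coprime_commute)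
    ultimately have "f dvd n"
      using coprime_dvd_mult_left_iff by blast
    then show ?thesis
      using coprime_divisors[OF \<open>f dvd n\<close> dvd_refl nd(3)] by (simp add: coprime_commute)
  qed
  have f1: "f1 dvd n" "coprime d f1" and f2: "f2 dvd n" "coprime d f2" and f3: "f3 dvd n" "coprime d f3"
    using factor[OF ker1 nz(1) ev(1)] factor[OF ker2 nz(2) ev(2)] factor[OF ker3 nz(3) ev(3)] by auto
  have "coprime f2 f1" "coprime f3 f1" "coprime f3 f2"
    using coprime_of_kernel[OF evals_to_is_ring_hom[OF ev(1)] ker1 nz(1) coprime(1)]
      coprime_of_kernel[OF evals_to_is_ring_hom[OF ev(1)] ker1 nz(1) coprime(2)]
      coprime_of_kernel[OF evals_to_is_ring_hom[OF ev(2)] ker2 nz(2) coprime(3)] .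
  then have "f1 * (f2 * f3) dvd n"
    using f1 f2 f3 by (simp add: divides_mult coprime_commute)
  then obtain k where "n = f1 * (f2 * f3) * k" ..
  then have "A - B = rf (prod_list [f1, f2, f3]) * Fract k d"
    using nd by (simp add: rf_def)
  then show ?thesis
    unfolding rf_cong_def using nd f1 f2 f3 by auto
qed

lemma evals_to_subst_ab:
  "evals_to (subst_ab x y) (rf va) x" "evals_to (subst_ab x y) (rf vb) y"
  "evals_to (subst_ab x y) (rf vc) (rf vc)" "evals_to (subst_ab x y) (rf vq) (rf vq)"
  using evals_to_rf[OF is_ring_hom_subst_ab, of x y va] evals_to_rf[OF is_ring_hom_subst_ab, of x y vb]
    evals_to_rf[OF is_ring_hom_subst_ab, of x y vc] evals_to_rf[OF is_ring_hom_subst_ab, of x y vq]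
  by simp_all

definition point_eval :: "complex \<Rightarrow> complex \<Rightarrow> complex \<Rightarrow> complex \<Rightarrow> mpoly4 \<Rightarrow> complex" where
  "point_eval xa xb xc xq = eval4 (\<lambda>z. z) xa xb xc xq"

lemma is_ring_hom_point_eval: "is_ring_hom (point_eval xa xb xc xq)"
  unfolding point_eval_def by (rule is_ring_hom_eval4) (simp add: is_ring_hom_def)

lemma point_eval_vars:
  "point_eval xa xb xc xq va = xa" "point_eval xa xb xc xq vb = xb"
  "point_eval xa xb xc xq vc = xc" "point_eval xa xb xc xq vq = xq"
  by (simp_all add: point_eval_def is_ring_hom_def)

lemma evals_to_point_eval:
  "evals_to (point_eval xa xb xc xq) (rf va) xa" "evals_to (point_eval xa xb xc xq) (rf vb) xb"
  "evals_to (point_eval xa xb xc xq) (rf vc) xc" "evals_to (point_eval xa xb xc xq) (rf vq) xq"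
  "evals_to (point_eval xa xb xc xq) 1 1"
  using evals_to_rf[OF is_ring_hom_point_eval, of xa xb xc xq va] evals_to_rf[OF is_ring_hom_point_eval, of xa xb xc xq vb]
    evals_to_rf[OF is_ring_hom_point_eval, of xa xb xc xq vc] evals_to_rf[OF is_ring_hom_point_eval, of xa xb xc xq vq]
    evals_to_1[OF is_ring_hom_point_eval]
  by (simp_all add: point_eval_vars)

lemma two_power_eq_1_iff: "(2 :: complex) ^ k = 1 \<longleftrightarrow> k = 0"
  by (metis of_nat_1 of_nat_eq_iff of_nat_numeral of_nat_power power_0 power_inject_exp one_less_numeral_iff semiring_norm(76))

context
  fixes d N :: nat
begin

abbreviation "a \<equiv> rf va"
abbreviation "b \<equiv> rf vb"
abbreviation "c \<equiv> rf vc"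
abbreviation "q \<equiv> rf vq"

lemma ratfun_nonzero:
  "a \<noteq> 0" "b \<noteq> 0" "c \<noteq> 0" "q \<noteq> 0"
  "a - q ^ N \<noteq> 0" "1 - a * q ^ N \<noteq> 0" "q ^ N - b \<noteq> 0" "1 - q ^ N * b \<noteq> 0"
  "(a - q ^ N) * (1 - a * q ^ N) \<noteq> 0" "(q ^ N - b) * (1 - q ^ N * b) \<noteq> 0"
  "(1 / q ^ N - b) * (1 - 1 / q ^ N * b) \<noteq> 0"
  "1 - c * (q ^ d) ^ i \<noteq> 0" "1 - c / q ^ 2 * (q ^ d) ^ i \<noteq> 0"
  "1 - q ^ (d + 3) / (b * c) * (q ^ d) ^ i \<noteq> 0" "1 - q ^ (d + 3) / (q ^ N * c) * (q ^ d) ^ i \<noteq> 0"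
  "1 - (a * q) * (q / a) * q ^ d / (c * (q ^ d) ^ n) * (q ^ d) ^ i \<noteq> 0"
  "1 - c * (q ^ d) ^ n / ((a * q) * (q / a)) \<noteq> 0"
  "1 - (q ^ N * q) * (q / b) * q ^ d / (c * (q ^ d) ^ n) * (q ^ d) ^ i \<noteq> 0"
  "1 - c * (q ^ d) ^ n / ((q ^ N * q) * (q / b)) \<noteq> 0"
  by (rule nonzero_if_evals_to_nonzero[where \<phi> = "point_eval 2 2 2 1"],
      (rule evals_to_rules evals_to_point_eval | (simp; fail))+)+

lemma q_power_nonzero:
  assumes "d > 0"
  shows "1 - q ^ d * (q ^ d) ^ i \<noteq> 0"
proof (rule nonzero_if_evals_to_nonzero[where \<phi> = "point_eval 2 2 2 2"])
  show "evals_to (point_eval 2 2 2 2) (1 - q ^ d * (q ^ d) ^ i) (1 - 2 ^ d * (2 ^ d) ^ i)"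
    by (rule evals_to_rules evals_to_point_eval)+
  show "1 - (2 :: complex) ^ d * (2 ^ d) ^ i \<noteq> 0"
    using assms two_power_eq_1_iff[of "d + d * i"] by (simp add: power_add power_mult)
qed

lemma inverse_q_power_minus_q_power_nonzero:
  assumes "N > 0"
  shows "1 / q ^ N - q ^ N \<noteq> 0"
proof (rule nonzero_if_evals_to_nonzero[where \<phi> = "point_eval 2 2 2 2"])
  have "evals_to (point_eval 2 2 2 2) (q ^ N) (2 ^ N)"
    by (rule evals_to_power evals_to_point_eval)+
  moreover have "(2 :: complex) ^ N \<noteq> 0"
    by simp
  ultimately show "evals_to (point_eval 2 2 2 2) (1 / q ^ N - q ^ N) (1 / 2 ^ N - 2 ^ N)"
    by (intro evals_to_diff evals_to_divide evals_to_point_eval)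
  show "1 / (2 :: complex) ^ N - 2 ^ N \<noteq> 0"
  proof
    assume "1 / (2 :: complex) ^ N - 2 ^ N = 0"
    then have "(2 :: complex) ^ (N + N) = 1"
      by (simp add: field_simps power_add)
    then show False
      using assms two_power_eq_1_iff by simp
  qed
qed

lemma subst_ab_difference_evals_to_0:
  assumes "d > 0"
    and "x \<noteq> 0" "y \<noteq> 0" "(x - y) * (1 - x * y) \<noteq> 0" "\<And>i. 1 - q ^ (d + 3) / (y * c) * (q ^ d) ^ i \<noteq> 0"
    and "trunc_sum d m x y c q = closed_form d m N x y c q"
  shows "evals_to (subst_ab x y) (trunc_sum d m a b c q - closed_form d m N a b c q) 0"
proof -
  have "evals_to (subst_ab x y) (trunc_sum d m a b c q) (trunc_sum d m x y c q)"
    using assms(1-3,5) ratfun_nonzero q_power_nonzero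
    by (intro evals_to_trunc_sum evals_to_subst_ab) (auto intro!: qpoch_neq_0)
  moreover have "evals_to (subst_ab x y) (closed_form d m N a b c q) (closed_form d m N x y c q)"
    using assms(2-5) ratfun_nonzero
    by (intro evals_to_closed_form evals_to_subst_ab) (auto intro!: qpoch_neq_0)
  ultimately show ?thesis
    using evals_to_diff assms(6) by fastforce
qed

lemma trunc_sum_congruence:
  assumes "d > 0" "N = d * m + 1"
  shows "rf_cong (trunc_sum d m a b c q) (closed_form d m N a b c q) [1 - va * vq ^ N, va - vq ^ N, vb - vq ^ N]"
proof -
  have N: "q ^ N = q * (q ^ d) ^ m"
    using assms(2) by (simp add: power_add power_mult mult.commute)
  have hP: "\<forall>i<m. 1 - q ^ d * (q ^ d) ^ i \<noteq> 0"
    using q_power_nonzero[OF assms(1)] by blast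
  have hC: "\<forall>i<m. 1 - c * (q ^ d) ^ i \<noteq> 0"
    using ratfun_nonzero by blast
  have "q ^ N \<noteq> 0" "1 / q ^ N \<noteq> 0"
    using ratfun_nonzero(4) by simp_all
  show ?thesis
  proof (rule rf_cong_of_kernels)
    show "evals_to (subst_ab (1 / q ^ N) b) (trunc_sum d m a b c q - closed_form d m N a b c q) 0"
      using \<open>1 / q ^ N \<noteq> 0\<close> ratfun_nonzero
      by (intro subst_ab_difference_evals_to_0 assms(1) trunc_sum_eq_closed_form_inverse_a[OF _ _ _ N _ _ hP hC]) auto
    show "evals_to (subst_ab (q ^ N) b) (trunc_sum d m a b c q - closed_form d m N a b c q) 0"
      using \<open>q ^ N \<noteq> 0\<close> ratfun_nonzero
      by (intro subst_ab_difference_evals_to_0 assms(1) trunc_sum_eq_closed_form_a[OF _ _ _ N _ _ hP hC]) auto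
    show "evals_to (subst_ab a (q ^ N)) (trunc_sum d m a b c q - closed_form d m N a b c q) 0"
      using \<open>q ^ N \<noteq> 0\<close> ratfun_nonzero
      by (intro subst_ab_difference_evals_to_0 assms(1) trunc_sum_eq_closed_form_b[OF _ _ _ N _ _ hP hC]) auto
    show "subst_ab (1 / q ^ N) b g = 0 \<longleftrightarrow> (1 - va * vq ^ N) dvd g" for g
      using assms(2) by (intro subst_a_inverse_qpower_eq_0_iff) simp
    show "subst_ab (q ^ N) b g = 0 \<longleftrightarrow> (va - vq ^ N) dvd g" for g
      by (rule subst_a_qpower_eq_0_iff)
    show "subst_ab a (q ^ N) g = 0 \<longleftrightarrow> (vb - vq ^ N) dvd g" for g
      by (rule subst_b_qpower_eq_0_iff)
    have "rf (1 - va * vq ^ N) = 1 - a * q ^ N" "rf (va - vq ^ N) = a - q ^ N" "rf (vb - vq ^ N) = - (q ^ N - b)"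
      by (simp_all add: rf_simps)
    then show "1 - va * vq ^ N \<noteq> 0" "va - vq ^ N \<noteq> 0" "vb - vq ^ N \<noteq> 0"
      using ratfun_nonzero(5,6,7) rf_simps(4) neg_equal_0_iff_equal by metis+
    show "subst_ab (1 / q ^ N) b (va - vq ^ N) \<noteq> 0"
      using inverse_q_power_minus_q_power_nonzero assms(2) by (simp add: subst_ab_simps)
    show "subst_ab (1 / q ^ N) b (vb - vq ^ N) \<noteq> 0" "subst_ab (q ^ N) b (vb - vq ^ N) \<noteq> 0"
      using ratfun_nonzero(7) by (auto simp: subst_ab_simps)
  qed
qed

end

lemma mult_mod_eq_1:
  fixes d n t :: nat
  assumes "d \<ge> 2" "t \<in> {1, d - 1}" "n mod d = t mod d"
  shows "t * n mod d = 1"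
proof -
  have "t * n mod d = t * t mod d"
    using assms(3) by (metis mod_mult_right_eq)
  moreover have "t * t mod d = 1"
  proof (cases "t = 1")
    case False
    obtain k where d: "d = k + 2"
      using assms(1) by (metis add.commute le_Suc_ex)
    with False assms(2) have "t * t = k * (k + 2) + 1"
      by (simp add: algebra_simps)
    then show ?thesis
      unfolding d by (simp only: mod_mult_self3) simp
  qed (use assms(1) in simp)
  ultimately show ?thesis by simp
qed

theorem theorem2p1:
  fixes d n t :: nat
  assumes "d \<ge> 2" and "n > 0" and "t \<in> {1, d - 1}" and "n mod d = t mod d"
  shows "let a = rf va; b = rf vb; c = rf vc; q = rf vq;
             p = q ^ d; N = t * n; m = (t * n - 1) div d in
    rf_cong
      (\<Sum>k = 0..m. qpoch (a * q) p k * qpoch (q / a) p k * qpoch (q / b) p k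
          / (qpoch p p k * qpoch c p k * qpoch (q ^ (d + 3) / (b * c)) p k) * p ^ k)
      ((1 - a * q ^ N) * (a - q ^ N) / ((a - b) * (1 - a * b))
          * (qpoch (c / (a * q)) p m * qpoch (a * c / q) p m)
          / (qpoch c p m * qpoch (c / q ^ 2) p m)
       + (b - q ^ N) * (a * b - 1 - a ^ 2 + a * q ^ N) / ((a - b) * (1 - a * b))
          * ((q / b) ^ m * qpoch (b * c / q) p m * qpoch (q ^ (d + 2) / c) p m)
          / (qpoch c p m * qpoch (q ^ (d + 3) / (b * c)) p m))
      [1 - va * vq ^ N, va - vq ^ N, vb - vq ^ N]"
proof -
  define N where "N = t * n"
  define m where "m = (t * n - 1) div d"
  have "N mod d = 1"
    unfolding N_def using assms(1,3,4) by (rule mult_mod_eq_1)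
  then have "N = d * (N div d) + 1"
    by (metis div_mult_mod_eq mult.commute)
  moreover from this have "m = N div d"
    unfolding m_def N_def[symmetric] using assms(1) by (metis add_diff_cancel_right' nonzero_mult_div_cancel_left not_numeral_le_zero)
  ultimately have "N = d * m + 1"
    by simp
  then have "rf_cong (trunc_sum d m (rf va) (rf vb) (rf vc) (rf vq)) (closed_form d m N (rf va) (rf vb) (rf vc) (rf vq))
      [1 - va * vq ^ N, va - vq ^ N, vb - vq ^ N]"
    using assms(1) by (intro trunc_sum_congruence) simp_all
  then show ?thesis
    unfolding Let_def trunc_sum_def closed_form_def N_def m_def .
qed

end
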